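(* Let $p,q,s,u,v,w,t$ be parameters and let $(a_n)_{n\ge0}$ be defined by $a_0=1$, $a_1=p$, $a_2=q$, $a_3=s$ and, for $n\ge4$, $$a_n=u\,a_{n-1}+v\,a_{n-2}+w\,a_{n-3}+t\sum_{k=1}^{n-4}a_ka_{n-k-3}.$$ Let $N(x)=1+(p-u)x-(v+pu-q)x^2-(w-s-t+qu+pv)x^3$ and $D(x)=1-ux-vx^2-(w-2t)x^3$. Then the generating function $\sum_{n\ge0}a_nx^n$ equals $$\left(\frac{N(x)}{D(x)},\ \frac{tx^3N(x)}{D(x)^2}\right)\cdot c(x)=\frac{N(x)}{D(x)}\,c\!\left(\frac{tx^3N(x)}{D(x)^2}\right).$$
   Context: $c(x)=\frac{1-\sqrt{1-4x}}{2x}$ is the generating function of the Catalan numbers. For power series $g(x)$ with $g(0)\neq0$ and $f(x)$ with $f(0)=0$, the Riordan array $(g,f)$ acts on a power series $h(x)$ by $(g,f)\cdot h(x)=g(x)h(f(x))$. *)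

theory Defs
  imports "HOL-Computational_Algebra.Formal_Power_Series"
begin

definition catalan :: "nat \<Rightarrow> nat" where
  "catalan n = (2 * n choose n) div (n + 1)"

definition catalan_fps :: "'a::comm_ring_1 fps" where
  "catalan_fps = Abs_fps (\<lambda>n. of_nat (catalan n))"

text \<open>Action of the Riordan array (g, f) on a power series h: g(x) h(f(x)).\<close>
definition riordan_act :: "'a::field fps \<Rightarrow> 'a fps \<Rightarrow> 'a fps \<Rightarrow> 'a fps" where
  "riordan_act g f h = g * fps_compose h f"

end

(*
  With A = sum a_n x^n and T = t x^3, the recurrence says exactly that A D - T A^2 = N:
  the convolution sum_{k=1..n-4} a_k a_(n-k-3) is the coefficient of x^n in x^3 A^2 minus its
  two boundary terms 2 a_(n-3), which is where w - 2t in D comes from, and N collects the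
  initial terms. Since c = 1 + x c^2, the series G = (N/D) c(T N/D^2) satisfies the same
  quadratic equation. Two solutions A, G give (A - G) (D - T (A + G)) = 0, and the second
  factor has constant term 1, so A = G. The identity c = 1 + x c^2 comes from the Vandermonde
  convolution for -1/2, sum_k C(2k,k) C(2n-2k,n-k) = 4^n, i.e. sum C(2n,n) x^n = 1/sqrt(1 - 4x).
*)
theory Submission
  imports Defs
begin

lemma central_binomial_gchoose:
  "real (2 * n choose n) = (-4) ^ n * ((-1/2) gchoose n)"
proof -
  have "real (2 * n choose n) = fact (2 * n) / (fact n * fact n)"
    by (simp add: binomial_fact)
  also have "\<dots> = 4 ^ n * pochhammer (1/2) n / fact n"
    by (simp add: fact_double power_mult)
  also have "\<dots> = (-4) ^ n * ((-1) ^ n * pochhammer (1/2) n / fact n)"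
    by (simp add: power_mult_distrib[symmetric])
  finally show ?thesis
    by (simp add: gbinomial_pochhammer)
qed

lemma central_binomial_convolution:
  "(\<Sum>k = 0..n. real (2 * k choose k) * real (2 * (n - k) choose (n - k))) = 4 ^ n"
proof -
  have "(\<Sum>k = 0..n. real (2 * k choose k) * real (2 * (n - k) choose (n - k)))
      = (-4) ^ n * (\<Sum>k = 0..n. ((-1/2) gchoose k) * ((-1/2) gchoose (n - k)))"
    unfolding sum_distrib_left
  proof (rule sum.cong)
    fix k assume "k \<in> {0..n}"
    then have "(-4 :: real) ^ k * (-4) ^ (n - k) = (-4) ^ n"
      by (simp add: power_add[symmetric])
    then show "real (2 * k choose k) * real (2 * (n - k) choose (n - k))
        = (-4) ^ n * (((-1/2) gchoose k) * ((-1/2) gchoose (n - k)))"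
      by (simp add: central_binomial_gchoose)
  qed simp
  also have "\<dots> = (-4) ^ n * ((-1) gchoose n)"
    by (simp add: gbinomial_Vandermonde)
  also have "\<dots> = 4 ^ n"
    using gbinomial_minus[of "1::real" n]
    by (simp add: binomial_gbinomial[symmetric] power_mult_distrib[symmetric])
  finally show ?thesis .
qed

lemma central_binomial_Suc:
  "Suc n * (2 * Suc n choose Suc n) = 2 * (2 * n + 1) * (2 * n choose n)"
proof -
  have "Suc n * (2 * Suc n choose Suc n) = 2 * Suc n * (Suc (2 * n) choose n)"
    using binomial_absorption[of n "2 * Suc n"] by simp
  moreover have "Suc n * (Suc (2 * n) choose n) = (2 * n + 1) * (2 * n choose n)"
    using binomial_absorb_comp[of "Suc (2 * n)" n] by (simp add: Suc_diff_le)
  ultimately show ?thesis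
    by (metis mult.assoc)
qed

lemma Suc_mult_catalan: "Suc n * catalan n = 2 * n choose n"
proof -
  have "Suc n * (2 * n choose Suc n) = n * (2 * n choose n)"
    using binomial_absorption[of n "2 * n"] binomial_absorb_comp[of "2 * n" n]
    by (simp only: mult_2 add_diff_cancel_right')
  then have "2 * n choose n = Suc n * ((2 * n choose n) - (2 * n choose Suc n))"
    by (simp add: diff_mult_distrib2)
  then show ?thesis
    unfolding catalan_def by (metis Suc_eq_plus1 nonzero_mult_div_cancel_left Zero_not_Suc)
qed

lemma central_binomial_fps_square:
  "(1 - 4 * fps_X) * Abs_fps (\<lambda>n. real (2 * n choose n)) ^ 2 = 1"
proof -
  have "Abs_fps (\<lambda>n. real (2 * n choose n)) ^ 2 = Abs_fps (\<lambda>n. 4 ^ n)"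
    by (simp add: fps_eq_iff power2_eq_square fps_mult_nth central_binomial_convolution)
  moreover have "(1 - 4 * fps_X) * Abs_fps (\<lambda>n. 4 ^ n) = (1 :: real fps)"
  proof (rule fps_ext)
    fix n
    show "fps_nth ((1 - 4 * fps_X) * Abs_fps (\<lambda>n. 4 ^ n)) n = fps_nth (1 :: real fps) n"
      by (cases n) (simp_all add: algebra_simps numeral_fps_const)
  qed
  ultimately show ?thesis
    by simp
qed

lemma catalan_fps_central_binomial:
  "2 * fps_X * catalan_fps = 1 - (1 - 4 * fps_X) * Abs_fps (\<lambda>n. real (2 * n choose n))"
proof (rule fps_ext)
  fix n
  show "fps_nth (2 * fps_X * catalan_fps) n
      = fps_nth (1 - (1 - 4 * fps_X) * Abs_fps (\<lambda>n. real (2 * n choose n))) n"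
  proof (cases n)
    case (Suc m)
    have "real (Suc m) * (2 * real (catalan m))
        = real (Suc m) * (4 * real (2 * m choose m) - real (2 * Suc m choose Suc m))"
      using arg_cong[OF Suc_mult_catalan[of m], of real]
        arg_cong[OF central_binomial_Suc[of m], of real]
      by (simp only: of_nat_mult of_nat_add of_nat_numeral of_nat_1) (simp add: algebra_simps)
    then have "2 * real (catalan m) = 4 * real (2 * m choose m) - real (2 * Suc m choose Suc m)"
      by simp
    then show ?thesis
      using Suc by (simp add: catalan_fps_def numeral_fps_const algebra_simps
          del: binomial_Suc_Suc)
  qed (simp add: numeral_fps_const)
qed

lemma catalan_fps_quadratic_real: "fps_X * catalan_fps ^ 2 = (catalan_fps :: real fps) - 1"
proof -
  define S :: "real fps" where "S = (1 - 4 * fps_X) * Abs_fps (\<lambda>n. real (2 * n choose n))"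
  \<comment> \<open>\<open>S = sqrt (1 - 4x)\<close>, and \<open>2 x c = 1 - S\<close> is the closed form of \<open>c\<close>\<close>
  have S_square: "S ^ 2 = 1 - 4 * fps_X"
    using central_binomial_fps_square unfolding S_def
    by (simp add: power_mult_distrib power2_eq_square mult_ac)
  have "4 * fps_X * (fps_X * catalan_fps ^ 2 - catalan_fps + 1)
      = (2 * fps_X * catalan_fps) ^ 2 - 2 * (2 * fps_X * catalan_fps) + (4 * fps_X :: real fps)"
    by (simp add: algebra_simps power2_eq_square)
  also have "\<dots> = (1 - S) ^ 2 - 2 * (1 - S) + 4 * fps_X"
    unfolding S_def catalan_fps_central_binomial ..
  also have "\<dots> = 0"
    using S_square by (simp add: algebra_simps power2_eq_square)
  finally have "4 * fps_X * (fps_X * catalan_fps ^ 2 - catalan_fps + 1) = (0 :: real fps)" .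
  moreover have "4 * fps_X \<noteq> (0 :: real fps)"
    by simp
  ultimately have "fps_X * catalan_fps ^ 2 - catalan_fps + 1 = (0 :: real fps)"
    by (simp only: mult_eq_0_iff) simp
  then show ?thesis
    by (simp add: algebra_simps)
qed

lemma catalan_Suc: "catalan (Suc n) = (\<Sum>i = 0..n. catalan i * catalan (n - i))"
proof -
  have "fps_nth (fps_X * catalan_fps ^ 2) (Suc n) = fps_nth (catalan_fps - 1 :: real fps) (Suc n)"
    by (simp only: catalan_fps_quadratic_real)
  then have "real (catalan (Suc n)) = real (\<Sum>i = 0..n. catalan i * catalan (n - i))"
    by (simp only: fps_X_mult_nth power2_eq_square) (simp add: fps_mult_nth catalan_fps_def)
  then show ?thesis
    by (simp only: of_nat_eq_iff)
qed

lemma catalan_fps_quadratic: "catalan_fps = 1 + fps_X * (catalan_fps :: 'a :: comm_ring_1 fps) ^ 2"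
proof (rule fps_ext)
  fix n
  show "fps_nth catalan_fps n = fps_nth (1 + fps_X * (catalan_fps :: 'a fps) ^ 2) n"
  proof (cases n)
    case 0
    then show ?thesis
      by (simp add: catalan_fps_def catalan_def)
  next
    case (Suc m)
    then show ?thesis
      by (simp only: fps_add_nth fps_X_mult_nth power2_eq_square)
        (simp add: catalan_fps_def catalan_Suc fps_mult_nth)
  qed
qed

lemma fps_compose_catalan_fps:
  fixes F :: "'a :: idom fps"
  assumes "fps_nth F 0 = 0"
  shows "fps_compose catalan_fps F = 1 + F * (fps_compose catalan_fps F) ^ 2"
  by (subst catalan_fps_quadratic)
    (simp add: assms fps_compose_add_distrib fps_compose_mult_distrib fps_compose_power)

lemma fps_quadratic_solution_unique:
  fixes A B D T N :: "'a :: idom fps"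
  assumes D0: "fps_nth D 0 \<noteq> 0" and T0: "fps_nth T 0 = 0"
    and A: "A * D - T * A ^ 2 = N" and B: "B * D - T * B ^ 2 = N"
  shows "A = B"
proof -
  have "(A - B) * (D - T * (A + B)) = (A * D - T * A ^ 2) - (B * D - T * B ^ 2)"
    by (simp add: algebra_simps power2_eq_square)
  also have "\<dots> = 0"
    by (simp add: A B)
  finally have "(A - B) * (D - T * (A + B)) = 0" .
  moreover have "D - T * (A + B) \<noteq> 0"
    using D0 T0 by (metis diff_zero fps_mult_nth_0 fps_sub_nth fps_zero_nth mult_zero_left)
  ultimately show ?thesis
    by simp
qed

lemma riordan_act_catalan_fps_quadratic:
  fixes D T N :: "'a :: field fps"
  assumes D0: "fps_nth D 0 \<noteq> 0" and T0: "fps_nth T 0 = 0"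
  defines "G \<equiv> riordan_act (N * inverse D) (T * N * inverse (D ^ 2)) catalan_fps"
  shows "G * D - T * G ^ 2 = N"
proof -
  define F where "F = T * N * inverse (D ^ 2)"
  define K where "K = fps_compose catalan_fps F"
  have K: "K = 1 + F * K ^ 2"
    unfolding K_def by (rule fps_compose_catalan_fps) (simp add: F_def T0)
  have DD: "D * inverse D = 1"
    using D0 by (simp add: inverse_mult_eq_1')
  have "G * D - T * G ^ 2 = N * (K * (D * inverse D) - (T * N * inverse D ^ 2) * K ^ 2)"
    unfolding G_def riordan_act_def K_def F_def by (simp add: algebra_simps power2_eq_square)
  also have "\<dots> = N * (K - F * K ^ 2)"
    by (simp add: DD F_def fps_inverse_power)
  also have "\<dots> = N"
    using K by (metis add_diff_cancel_right' mult.right_neutral)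
  finally show ?thesis .
qed

lemma fps_square_nth_Suc:
  fixes a :: "nat \<Rightarrow> 'a :: comm_ring_1"
  assumes "a 0 = 1"
  shows "fps_nth (Abs_fps a ^ 2) (Suc m) = 2 * a (Suc m) + (\<Sum>k = 1..m. a k * a (Suc m - k))"
proof -
  have "fps_nth (Abs_fps a ^ 2) (Suc m) = (\<Sum>k = 0..Suc m. a k * a (Suc m - k))"
    by (simp add: power2_eq_square fps_mult_nth)
  also have "\<dots> = a 0 * a (Suc m) + (\<Sum>k = 1..m. a k * a (Suc m - k)) + a (Suc m) * a 0"
    by (simp add: sum.atLeast0_atMost_Suc sum.atLeast_Suc_atMost)
  finally show ?thesis
    using assms by simp
qed

lemma fps_const_X_power_mult_nth:
  "fps_nth (fps_const c * fps_X ^ k * f) n = (if n < k then 0 else c * fps_nth f (n - k))"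
  by (simp add: mult.assoc fps_X_power_mult_nth)

lemma recurrence_fps_quadratic:
  fixes p q s u v w t :: "'a :: comm_ring_1" and a :: "nat \<Rightarrow> 'a"
  assumes a0: "a 0 = 1" and a1: "a 1 = p" and a2: "a 2 = q" and a3: "a 3 = s"
    and rec: "\<And>n. n \<ge> 4 \<Longrightarrow>
           a n = u * a (n - 1) + v * a (n - 2) + w * a (n - 3)
                 + t * (\<Sum>k = 1..n - 4. a k * a (n - k - 3))"
  defines "N \<equiv> 1 + fps_const (p - u) * fps_X - fps_const (v + p * u - q) * fps_X ^ 2
               - fps_const (w - s - t + q * u + p * v) * fps_X ^ 3"
    and "D \<equiv> 1 - fps_const u * fps_X - fps_const v * fps_X ^ 2 - fps_const (w - 2 * t) * fps_X ^ 3"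
  shows "Abs_fps a * D - fps_const t * fps_X ^ 3 * Abs_fps a ^ 2 = N"
proof (rule fps_ext)
  fix n
  let ?A = "Abs_fps a"
  have lhs: "fps_nth (?A * D - fps_const t * fps_X ^ 3 * ?A ^ 2) n
      = a n - fps_nth (fps_const u * fps_X ^ 1 * ?A) n
        - fps_nth (fps_const v * fps_X ^ 2 * ?A) n
        - fps_nth (fps_const (w - 2 * t) * fps_X ^ 3 * ?A) n
        - fps_nth (fps_const t * fps_X ^ 3 * ?A ^ 2) n"
    unfolding D_def by (simp add: algebra_simps)
  have rhs: "fps_nth N n = (if n = 0 then 1 else if n = 1 then p - u else if n = 2 then q - v - p * u
      else if n = 3 then s + t - w - q * u - p * v else 0)"
    unfolding N_def by simp
  show "fps_nth (?A * D - fps_const t * fps_X ^ 3 * ?A ^ 2) n = fps_nth N n"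
  proof (cases "n < 4")
    case True
    then consider "n = 0" | "n = 1" | "n = 2" | "n = 3"
      by linarith
    then show ?thesis
      unfolding lhs rhs fps_const_X_power_mult_nth
      using a1 by cases (simp_all add: a0 a2 a3 power2_eq_square fps_mult_nth)
  next
    case False
    then obtain j where j: "n = j + 4"
      by (metis add.commute le_Suc_ex not_less)
    have "a n = u * a (n - 1) + v * a (n - 2) + w * a (n - 3) + t * (\<Sum>k = 1..j. a k * a (Suc j - k))"
      using rec[of n] j by (simp add: Suc_diff_le)
    then show ?thesis
      unfolding lhs rhs fps_const_X_power_mult_nth
      using j by (simp add: fps_square_nth_Suc[of a, OF a0] algebra_simps)
  qed
qed

theorem mainTheorem7:
  fixes p q s u v w t :: "'a::field" and a :: "nat \<Rightarrow> 'a"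
  assumes "a 0 = 1" and "a 1 = p" and "a 2 = q" and "a 3 = s"
    and "\<And>n. n \<ge> 4 \<Longrightarrow>
           a n = u * a (n - 1) + v * a (n - 2) + w * a (n - 3)
                 + t * (\<Sum>k = 1..n - 4. a k * a (n - k - 3))"
  defines "N \<equiv> 1 + fps_const (p - u) * fps_X - fps_const (v + p * u - q) * fps_X ^ 2
               - fps_const (w - s - t + q * u + p * v) * fps_X ^ 3"
    and "D \<equiv> 1 - fps_const u * fps_X - fps_const v * fps_X ^ 2 - fps_const (w - 2 * t) * fps_X ^ 3"
  shows "Abs_fps a = riordan_act (N * inverse D) (fps_const t * fps_X ^ 3 * N * inverse (D ^ 2)) catalan_fps
       \<and> riordan_act (N * inverse D) (fps_const t * fps_X ^ 3 * N * inverse (D ^ 2)) catalan_fps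
         = (N * inverse D) * fps_compose catalan_fps (fps_const t * fps_X ^ 3 * N * inverse (D ^ 2))"
proof -
  define T :: "'a fps" where "T = fps_const t * fps_X ^ 3"
  have D0: "fps_nth D 0 \<noteq> 0" and T0: "fps_nth T 0 = 0"
    unfolding D_def T_def by simp_all
  have "Abs_fps a * D - T * Abs_fps a ^ 2 = N"
    using recurrence_fps_quadratic[OF assms(1-5)] unfolding N_def D_def T_def .
  moreover have "riordan_act (N * inverse D) (T * N * inverse (D ^ 2)) catalan_fps * D
      - T * riordan_act (N * inverse D) (T * N * inverse (D ^ 2)) catalan_fps ^ 2 = N"
    by (rule riordan_act_catalan_fps_quadratic[OF D0 T0])
  ultimately have "Abs_fps a = riordan_act (N * inverse D) (T * N * inverse (D ^ 2)) catalan_fps"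
    by (rule fps_quadratic_solution_unique[OF D0 T0])
  then show ?thesis
    unfolding T_def riordan_act_def by simp
qed

end
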